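(* Let $U$ be a general quantum walk on a finite graph $G=(V,E)$ with auxiliary space of dimension $d$. Suppose there is a probability distribution $\pi$ on $V$ such that for every basis state $|a,v\rangle$ ($a\in\{1,\dots,d\}$, $v\in V$), the limit $\lim_{T\to\infty}\bar P_T(\cdot|a,v)$ exists and equals $\pi$. Then $\pi$ is the uniform distribution on $V$.
   Context: $\mathcal H=\mathcal H_A\otimes\mathcal H_V$ with orthonormal basis $|a,v\rangle$, $a\in\{1,\dots,d\}$, $v\in V$. A general quantum walk on $G$ is a unitary $U$ on $\mathcal H$ such that each $U|a,v\rangle$ is a linear combination only of $|a',v'\rangle$ with $v'$ equal to $v$ or a neighbour of $v$. $P_t(v|\alpha_0)=\sum_a|\langle a,v|U^t\alpha_0\rangle|^2$, $\bar P_T(v|\alpha_0)=\frac1T\sum_{t=0}^{T-1}P_t(v|\alpha_0)$. *)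

theory Defs
  imports "HOL-Analysis.Analysis"
begin

text \<open>Operators on the finite-dimensional Hilbert space with orthonormal basis indexed by
  a finite type 'i (here 'i = aux-index \<times> vertex); a matrix A has entries A i j = <i|A|j>.\<close>

type_synonym 'i cmat = "'i \<Rightarrow> 'i \<Rightarrow> complex"
type_synonym 'i cvec = "'i \<Rightarrow> complex"

definition mmult :: "'i::finite cmat \<Rightarrow> 'i cmat \<Rightarrow> 'i cmat" where
  "mmult A B = (\<lambda>i j. \<Sum>k\<in>UNIV. A i k * B k j)"

definition mid :: "'i cmat" where
  "mid = (\<lambda>i j. if i = j then 1 else 0)"

primrec mpow :: "'i::finite cmat \<Rightarrow> nat \<Rightarrow> 'i cmat" where
  "mpow A 0 = mid"
| "mpow A (Suc n) = mmult A (mpow A n)"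

definition madjoint :: "'i cmat \<Rightarrow> 'i cmat" where
  "madjoint A = (\<lambda>i j. cnj (A j i))"

definition is_unitary :: "'i::finite cmat \<Rightarrow> bool" where
  "is_unitary U \<longleftrightarrow> mmult (madjoint U) U = mid \<and> mmult U (madjoint U) = mid"

definition mapply :: "'i::finite cmat \<Rightarrow> 'i cvec \<Rightarrow> 'i cvec" where
  "mapply A x = (\<lambda>i. \<Sum>j\<in>UNIV. A i j * x j)"

definition basis_state :: "'i \<Rightarrow> 'i cvec" where
  "basis_state b = (\<lambda>i. if i = b then 1 else 0)"

definition general_qwalk :: "('v \<Rightarrow> 'v \<Rightarrow> bool) \<Rightarrow> ('a::finite \<times> 'v::finite) cmat \<Rightarrow> bool" where
  "general_qwalk E U \<longleftrightarrow> is_unitary U \<and>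
     (\<forall>a v a' v'. U (a', v') (a, v) \<noteq> 0 \<longrightarrow> v' = v \<or> E v v')"

definition prob_t :: "('a::finite \<times> 'v::finite) cmat \<Rightarrow> nat \<Rightarrow> 'v \<Rightarrow> ('a \<times> 'v) cvec \<Rightarrow> real" where
  "prob_t U t v \<alpha> = (\<Sum>a\<in>UNIV. (cmod (mapply (mpow U t) \<alpha> (a, v)))\<^sup>2)"

definition avg_prob :: "('a::finite \<times> 'v::finite) cmat \<Rightarrow> nat \<Rightarrow> 'v \<Rightarrow> ('a \<times> 'v) cvec \<Rightarrow> real" where
  "avg_prob U T v \<alpha> = (1 / real T) * (\<Sum>t<T. prob_t U t v \<alpha>)"

end

theory Submission
  imports Defs
begin

text \<open>Summing over all \<open>d |V|\<close> initial basis states, the total probability of finding the walk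
  at \<open>w\<close> after \<open>t\<close> steps is the sum of the squared norms of the \<open>d\<close> rows of the unitary \<open>U\<^sup>t\<close>
  indexed by \<open>(a, w)\<close>, i.e. exactly \<open>d\<close>. Averaging over time and passing to the limit gives
  \<open>d |V| \<pi>(w) = d\<close>.\<close>

lemma mmult_assoc: "mmult (mmult A B) C = mmult A (mmult B C)"
  unfolding mmult_def
  by (auto simp: fun_eq_iff sum_distrib_left sum_distrib_right mult.assoc intro: sum.swap)

lemma mmult_mid_left [simp]: "mmult mid A = A"
  unfolding mmult_def mid_def by (simp add: fun_eq_iff if_distrib[of "\<lambda>c. c * _"] cong: if_cong)

lemma madjoint_mmult: "madjoint (mmult A B) = mmult (madjoint B) (madjoint A)"
  unfolding mmult_def madjoint_def by (simp add: fun_eq_iff mult.commute)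

lemma madjoint_mid [simp]: "madjoint mid = mid"
  unfolding madjoint_def mid_def by (simp add: fun_eq_iff)

lemma is_unitary_mid: "is_unitary (mid :: 'i::finite cmat)"
  unfolding is_unitary_def by simp

lemma is_unitary_mmult:
  assumes "is_unitary A" "is_unitary B"
  shows "is_unitary (mmult A B)"
proof -
  have "mmult (madjoint (mmult A B)) (mmult A B)
      = mmult (madjoint B) (mmult (mmult (madjoint A) A) B)"
    by (simp add: madjoint_mmult mmult_assoc)
  moreover have "mmult (mmult A B) (madjoint (mmult A B))
      = mmult A (mmult (mmult B (madjoint B)) (madjoint A))"
    by (simp add: madjoint_mmult mmult_assoc)
  ultimately show ?thesis
    using assms unfolding is_unitary_def by simp
qed

lemma is_unitary_mpow: "is_unitary U \<Longrightarrow> is_unitary (mpow U t)"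
  by (induction t) (simp_all add: is_unitary_mid is_unitary_mmult)

lemma unitary_row_norm:
  assumes "is_unitary M"
  shows "(\<Sum>j\<in>UNIV. (cmod (M i j))\<^sup>2) = 1"
proof -
  have "mmult M (madjoint M) i i = 1"
    using assms unfolding is_unitary_def mid_def by simp
  then have "complex_of_real (\<Sum>j\<in>UNIV. (cmod (M i j))\<^sup>2) = 1"
    unfolding mmult_def madjoint_def by (simp add: complex_norm_square del: of_real_power)
  then show ?thesis
    using of_real_eq_1_iff by blast
qed

lemma mapply_basis_state: "mapply M (basis_state b) i = M i b"
  unfolding mapply_def basis_state_def by (simp add: if_distrib cong: if_cong)

lemma sum_prob_t_basis_states:
  fixes U :: "('a::finite \<times> 'v::finite) cmat"
  assumes "is_unitary U"
  shows "(\<Sum>p\<in>UNIV. prob_t U t w (basis_state p)) = real CARD('a)"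
proof -
  have "(\<Sum>p\<in>UNIV. prob_t U t w (basis_state p))
      = (\<Sum>a\<in>UNIV. \<Sum>p\<in>UNIV. (cmod (mpow U t (a, w) p))\<^sup>2)"
    unfolding prob_t_def mapply_basis_state by (rule sum.swap)
  also have "\<dots> = (\<Sum>a\<in>(UNIV::'a set). 1)"
    using unitary_row_norm[OF is_unitary_mpow[OF assms]] by simp
  finally show ?thesis by simp
qed

lemma sum_avg_prob_basis_states:
  fixes U :: "('a::finite \<times> 'v::finite) cmat"
  assumes "is_unitary U" and "T > 0"
  shows "(\<Sum>p\<in>UNIV. avg_prob U T w (basis_state p)) = real CARD('a)"
proof -
  have "(\<Sum>p\<in>UNIV. avg_prob U T w (basis_state p))
      = (1 / real T) * (\<Sum>t<T. \<Sum>p\<in>UNIV. prob_t U t w (basis_state p))"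
    unfolding avg_prob_def by (simp add: sum_distrib_left sum.swap[of _ UNIV])
  also have "\<dots> = real CARD('a)"
    using assms by (simp add: sum_prob_t_basis_states)
  finally show ?thesis .
qed

theorem mainTheorem4:
  fixes E :: "'v::finite \<Rightarrow> 'v \<Rightarrow> bool"
    and U :: "('a::finite \<times> 'v) cmat"
    and \<pi> :: "'v \<Rightarrow> real"
  assumes sym: "\<And>u w. E u w \<longleftrightarrow> E w u"
    and walk: "general_qwalk E U"
    and pi_nonneg: "\<And>v. \<pi> v \<ge> 0"
    and pi_sum: "(\<Sum>v\<in>UNIV. \<pi> v) = 1"
    and lim: "\<And>a v w. (\<lambda>T. avg_prob U T w (basis_state (a, v))) \<longlonglongrightarrow> \<pi> w"
  shows "\<forall>v. \<pi> v = 1 / real (card (UNIV :: 'v set))"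
proof
  fix w
  have unitary: "is_unitary U"
    using walk unfolding general_qwalk_def by simp
  let ?S = "\<lambda>T. \<Sum>p\<in>UNIV. avg_prob U T w (basis_state p)"
  have "?S \<longlonglongrightarrow> (\<Sum>p\<in>(UNIV::('a \<times> 'v) set). \<pi> w)"
    by (rule tendsto_sum) (use lim in auto)
  moreover have "\<forall>\<^sub>F T in sequentially. ?S T = real CARD('a)"
    using eventually_gt_at_top[of 0]
    by eventually_elim (use sum_avg_prob_basis_states[OF unitary] in blast)
  then have "?S \<longlonglongrightarrow> real CARD('a)"
    by (rule tendsto_eventually)
  ultimately have "real CARD('a) * real CARD('v) * \<pi> w = real CARD('a)"
    by (auto dest: LIMSEQ_unique simp: card_prod mult.assoc)
  then show "\<pi> w = 1 / real CARD('v)"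
    by (simp add: field_simps)
qed

end
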